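(* Let $d$ be a (possibly extended) $K$-quasi-metric on $X$ and let $o\in X$ be a point other than the point at infinity $\infty$ of $d$. Let $d_o$ be the involution of $d$ at $o$. Then $\dim_N(X,d)=\dim_N(X,d_o)$.
   Context: A $K$-quasi-metric ($K\ge1$) is a symmetric map $d:X\times X\to[0,\infty)$ with $d(x,y)=0\iff x=y$ and $d(x,y)\le K\max(d(x,z),d(z,y))$; an extended one has exactly one point $\infty\in X$ with $d(x,\infty)=\infty$ for $x\ne\infty$, all other distances finite. The involution at $o\ne\infty$: $d_o(x,x)=0$, $d_o(x,y)=\frac{d(x,y)}{d(x,o)d(o,y)}$ for distinct $x,y\ne\infty$, $d_o(\infty,y)=1/d(o,y)$, $d_o(x,\infty)=1/d(x,o)$ for distinct points, with $\lambda/0=\infty$ for $\lambda>0$ (so $o$ is the point at infinity of $d_o$). Nagata dimension of a (possibly extended) quasi-metric space $(X,\rho)$ with point at infinity $\infty$ (if any): diameters taken w.r.t. $\rho$. A cover $\mathcal B$ of $X\setminus\{\infty\}$ is $C$-bounded if each $B\in\mathcal B$ has $\mathrm{diam}(B)\le C$. A family $\mathcal B$ has $s$-multiplicity $\le m$ if every $U\subset X$ with $\mathrm{diam}(U)\le s$ meets at most $m$ members of $\mathcal B$. $\dim_N(X,\rho)$ is the infimum of all $n$ for which there is $c>0$ such that for every $s>0$ there is a $cs$-bounded cover of $X\setminus\{\infty\}$ with $s$-multiplicity $\le n+1$. *)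

theory Defs
  imports "HOL-Analysis.Analysis"
begin

text \<open>The optional point at infinity is \<open>pinf\<close>:
  None = ordinary (all distances finite); Some p = extended with point at infinity p.\<close>

definition quasi_metric :: "'a set \<Rightarrow> real \<Rightarrow> ('a \<Rightarrow> 'a \<Rightarrow> ennreal) \<Rightarrow> 'a option \<Rightarrow> bool" where
  "quasi_metric X K d pinf \<longleftrightarrow>
     K \<ge> 1 \<and>
     (\<forall>x\<in>X. \<forall>y\<in>X. d x y = d y x) \<and>
     (\<forall>x\<in>X. \<forall>y\<in>X. d x y = 0 \<longleftrightarrow> x = y) \<and>
     (\<forall>x\<in>X. \<forall>y\<in>X. \<forall>z\<in>X. d x y \<le> ennreal K * max (d x z) (d z y)) \<and>
     (case pinf of
        None \<Rightarrow> (\<forall>x\<in>X. \<forall>y\<in>X. d x y < top)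
      | Some p \<Rightarrow> p \<in> X \<and> (\<forall>x\<in>X. x \<noteq> p \<longrightarrow> d x p = top) \<and>
                  (\<forall>x\<in>X. \<forall>y\<in>X. x \<noteq> p \<longrightarrow> y \<noteq> p \<longrightarrow> d x y < top) \<and>
                  (\<forall>q\<in>X. (\<forall>x\<in>X. x \<noteq> q \<longrightarrow> d x q = top) \<longrightarrow> q = p))"

text \<open>Involution of d at p0 (ennreal division: \<open>\<lambda>/0 = top\<close> for \<open>\<lambda> > 0\<close>).\<close>

definition involution :: "('a \<Rightarrow> 'a \<Rightarrow> ennreal) \<Rightarrow> 'a option \<Rightarrow> 'a \<Rightarrow> 'a \<Rightarrow> 'a \<Rightarrow> ennreal" where
  "involution d pinf p0 x y =
     (if x = y then 0
      else if Some x \<noteq> pinf \<and> Some y \<noteq> pinf then d x y / (d x p0 * d p0 y)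
      else if Some x = pinf then 1 / d p0 y
      else 1 / d x p0)"

definition qdiam :: "('a \<Rightarrow> 'a \<Rightarrow> ennreal) \<Rightarrow> 'a set \<Rightarrow> ennreal" where
  "qdiam \<rho> B = (SUP x\<in>B. SUP y\<in>B. \<rho> x y)"

definition mult_le :: "'a set \<Rightarrow> ('a \<Rightarrow> 'a \<Rightarrow> ennreal) \<Rightarrow> real \<Rightarrow> 'a set set \<Rightarrow> nat \<Rightarrow> bool" where
  "mult_le X \<rho> s \<B> m \<longleftrightarrow>
     (\<forall>U. U \<subseteq> X \<longrightarrow> qdiam \<rho> U \<le> ennreal s \<longrightarrow>
        finite {B\<in>\<B>. B \<inter> U \<noteq> {}} \<and> card {B\<in>\<B>. B \<inter> U \<noteq> {}} \<le> m)"

definition nagata_dim :: "'a set \<Rightarrow> ('a \<Rightarrow> 'a \<Rightarrow> ennreal) \<Rightarrow> 'a option \<Rightarrow> enat" where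
  "nagata_dim X \<rho> pinf = Inf {enat n | n. \<exists>c>0. \<forall>s>0. \<exists>\<B>.
      \<Union>\<B> = X - set_option pinf \<and>
      (\<forall>B\<in>\<B>. qdiam \<rho> B \<le> ennreal (c * s)) \<and>
      mult_le X \<rho> s \<B> (n + 1)}"

end

theory Submission
  imports Defs
begin

(* On the finite part, d(x,y) = d_o(x,y) d(x,o) d(o,y): each of d and d_o is the other one
   rescaled by a weight g(x) g(y), with g = d(.,o) in one direction and g = 1/d(.,o) in the other,
   and both are quasi-metrics (d_o with constant K^2, by a Ptolemy-type inequality). So it suffices
   to pull Nagata covers of a rescaled quasi-metric back to the original one. Points of small weight
   are sorted into levels k on which g is of order (2K)^k; there the two quasi-metrics differ by a
   factor of order (2K)^(2k), so a cover for the rescaled metric at scale s (2K)^(2k+2), cut down to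
   the level, is a bounded cover for the original metric. Levels of equal parity are more than s
   apart, so all even levels together, and all odd levels together, keep multiplicity n + 1. Points
   of large weight form one bounded set. The three families are merged without increasing the
   multiplicity by absorbing sets of a finer family into nearby sets of a coarser one. *)

lemma qdiam_le_iff: "qdiam \<rho> B \<le> r \<longleftrightarrow> (\<forall>x\<in>B. \<forall>y\<in>B. \<rho> x y \<le> r)"
  unfolding qdiam_def by (simp add: SUP_le_iff)

lemma mult_le_singleton:
  assumes "1 \<le> m"
  shows "mult_le X \<rho> s {F} m"
proof -
  have "card {B\<in>{F}. B \<inter> U \<noteq> {}} \<le> card {F}" for U
    by (rule card_mono) auto
  then show ?thesis
    using assms unfolding mult_le_def by (auto intro: order_trans)
qed

lemma meeting_card_le_image:
  assumes "mult_le X \<rho> t \<B> m" "V \<subseteq> X" "qdiam \<rho> V \<le> ennreal t"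
    and "{C\<in>\<C>. C \<inter> U \<noteq> {}} \<subseteq> f ` {B\<in>\<B>. B \<inter> V \<noteq> {}}"
  shows "finite {C\<in>\<C>. C \<inter> U \<noteq> {}} \<and> card {C\<in>\<C>. C \<inter> U \<noteq> {}} \<le> m"
  using assms unfolding mult_le_def by (meson finite_surj surj_card_le order_trans)

locale quasi_pseudometric =
  fixes X :: "'a set" and K :: real and \<rho> :: "'a \<Rightarrow> 'a \<Rightarrow> ennreal"
  assumes K_ge_1: "1 \<le> K"
    and symmetric: "x \<in> X \<Longrightarrow> y \<in> X \<Longrightarrow> \<rho> x y = \<rho> y x"
    and self_zero: "x \<in> X \<Longrightarrow> \<rho> x x = 0"
    and quasi_triangle: "x \<in> X \<Longrightarrow> y \<in> X \<Longrightarrow> z \<in> X \<Longrightarrow> \<rho> x y \<le> ennreal K * max (\<rho> x z) (\<rho> z y)"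
begin

lemma quasi_triangle_le:
  assumes "x \<in> X" "y \<in> X" "z \<in> X" "\<rho> x z \<le> ennreal r" "\<rho> z y \<le> ennreal r"
  shows "\<rho> x y \<le> ennreal (K * r)"
proof -
  have "\<rho> x y \<le> ennreal K * ennreal r"
    using quasi_triangle[OF assms(1-3)] assms(4,5) by (meson max.boundedI mult_left_mono order_trans zero_le)
  also have "\<dots> = ennreal (K * r)"
    using K_ge_1 by (simp add: ennreal_mult')
  finally show ?thesis .
qed

lemma le_K_mult: "0 \<le> t \<Longrightarrow> t \<le> K * t"
  using K_ge_1 mult_right_mono[of 1 K t] by simp

end

(* As B has
   multiplicity m already at the coarser scale K^3 (a + s), the glued family keeps multiplicity m
   at scale s. *)
locale absorption = quasi_pseudometric +
  fixes s a b :: real and \<A> \<B> :: "'a set set" and m :: nat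
  assumes s_nonneg: "0 \<le> s" and a_nonneg: "0 \<le> a" and b_nonneg: "0 \<le> b"
    and Union_\<A>: "\<Union>\<A> \<subseteq> X" and Union_\<B>: "\<Union>\<B> \<subseteq> X"
    and qdiam_\<A>: "A \<in> \<A> \<Longrightarrow> qdiam \<rho> A \<le> ennreal a"
    and mult_\<A>: "mult_le X \<rho> s \<A> m"
    and qdiam_\<B>: "B \<in> \<B> \<Longrightarrow> qdiam \<rho> B \<le> ennreal b"
    and mult_\<B>: "mult_le X \<rho> (K^3 * (a + s)) \<B> m"
begin

definition near :: "'a set \<Rightarrow> bool" where
  "near A \<longleftrightarrow> (\<exists>B\<in>\<B>. \<exists>x\<in>A. \<exists>y\<in>B. \<rho> x y \<le> ennreal s)"

definition partner :: "'a set \<Rightarrow> 'a set" where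
  "partner A = (SOME B. B \<in> \<B> \<and> (\<exists>x\<in>A. \<exists>y\<in>B. \<rho> x y \<le> ennreal s))"

definition enlarged :: "'a set \<Rightarrow> 'a set" where
  "enlarged B = B \<union> \<Union>{A\<in>\<A>. near A \<and> partner A = B}"

definition absorbed :: "'a set set" where
  "absorbed = enlarged ` \<B> \<union> {A\<in>\<A>. \<not> near A}"

lemma partner:
  assumes "near A"
  shows "partner A \<in> \<B> \<and> (\<exists>x\<in>A. \<exists>y\<in>partner A. \<rho> x y \<le> ennreal s)"
  unfolding partner_def by (rule someI_ex) (use assms in \<open>auto simp: near_def\<close>)

lemma Union_absorbed: "\<Union>absorbed = \<Union>\<A> \<union> \<Union>\<B>"
proof
  show "\<Union>absorbed \<subseteq> \<Union>\<A> \<union> \<Union>\<B>"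
    unfolding absorbed_def enlarged_def by auto
  show "\<Union>\<A> \<union> \<Union>\<B> \<subseteq> \<Union>absorbed"
  proof
    fix x assume "x \<in> \<Union>\<A> \<union> \<Union>\<B>"
    then consider A where "A \<in> \<A>" "x \<in> A" "near A" | A where "A \<in> \<A>" "x \<in> A" "\<not> near A"
      | B where "B \<in> \<B>" "x \<in> B"
      by blast
    then show "x \<in> \<Union>absorbed"
    proof cases
      case 1
      then have "x \<in> enlarged (partner A)" unfolding enlarged_def by blast
      then show ?thesis using partner[OF \<open>near A\<close>] unfolding absorbed_def by blast
    qed (auto simp: absorbed_def enlarged_def)
  qed
qed

lemma enlarged_close:
  assumes "B \<in> \<B>" "x \<in> enlarged B"
  shows "x \<in> X" "\<exists>y\<in>B. \<rho> x y \<le> ennreal (K * (a + s))"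
proof -
  show "x \<in> X" using assms Union_\<A> Union_\<B> unfolding enlarged_def by blast
  show "\<exists>y\<in>B. \<rho> x y \<le> ennreal (K * (a + s))"
  proof (cases "x \<in> B")
    case True
    then show ?thesis using self_zero \<open>x \<in> X\<close> by (intro bexI[of _ x]) auto
  next
    case False
    then obtain A where A: "A \<in> \<A>" "near A" "partner A = B" "x \<in> A"
      using assms(2) unfolding enlarged_def by blast
    then obtain x' y where x'y: "x' \<in> A" "y \<in> B" "\<rho> x' y \<le> ennreal s"
      using partner by blast
    have X: "x' \<in> X" "y \<in> X"
      using x'y A assms Union_\<A> Union_\<B> by blast+
    have "\<rho> x x' \<le> ennreal a"
      using qdiam_\<A> A x'y by (auto simp: qdiam_le_iff)
    then have "\<rho> x x' \<le> ennreal (a + s)"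
      using s_nonneg by (auto intro: order_trans[OF _ ennreal_leI])
    moreover have "\<rho> x' y \<le> ennreal (a + s)"
      using x'y(3) a_nonneg by (auto intro: order_trans[OF _ ennreal_leI])
    ultimately have "\<rho> x y \<le> ennreal (K * (a + s))"
      by (rule quasi_triangle_le[OF \<open>x \<in> X\<close> X(2,1)])
    then show ?thesis using x'y by blast
  qed
qed

lemma qdiam_enlarged:
  assumes "B \<in> \<B>"
  shows "qdiam \<rho> (enlarged B) \<le> ennreal (K^2 * (b + K * (a + s)))"
  unfolding qdiam_le_iff
proof (intro ballI)
  fix x y assume x: "x \<in> enlarged B" and y: "y \<in> enlarged B"
  obtain x' where x': "x' \<in> B" "\<rho> x x' \<le> ennreal (K * (a + s))"
    using enlarged_close[OF assms x] by blast
  obtain y' where y': "y' \<in> B" "\<rho> y y' \<le> ennreal (K * (a + s))"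
    using enlarged_close[OF assms y] by blast
  define r where "r = b + K * (a + s)"
  have X: "x \<in> X" "y \<in> X" "x' \<in> X" "y' \<in> X"
    using enlarged_close(1)[OF assms] x y x' y' assms Union_\<B> by blast+
  have r: "b \<le> r" "K * (a + s) \<le> r" "r \<le> K * r"
    using le_K_mult a_nonneg b_nonneg s_nonneg K_ge_1 unfolding r_def by auto
  have "\<rho> x' y' \<le> ennreal r"
    using qdiam_\<B>[OF assms] x' y' r(1) by (auto simp: qdiam_le_iff intro: order_trans[OF _ ennreal_leI])
  moreover have "\<rho> y' y \<le> ennreal r"
    using y'(2) r(2) symmetric[OF X(2,4)] by (auto intro: order_trans[OF _ ennreal_leI])
  ultimately have "\<rho> x' y \<le> ennreal (K * r)"
    by (rule quasi_triangle_le[OF X(3,2,4)])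
  moreover have "\<rho> x x' \<le> ennreal (K * r)"
    using x'(2) r(2,3) by (auto intro: order_trans[OF _ ennreal_leI])
  ultimately have "\<rho> x y \<le> ennreal (K * (K * r))"
    by (intro quasi_triangle_le[OF X(1,2,3)])
  then show "\<rho> x y \<le> ennreal (K^2 * (b + K * (a + s)))"
    by (simp add: r_def power2_eq_square mult.assoc)
qed

lemma qdiam_absorbed:
  assumes "C \<in> absorbed"
  shows "qdiam \<rho> C \<le> ennreal (K^2 * (b + K * (a + s)))"
proof -
  have "a \<le> b + K * (a + s)"
    using le_K_mult[of "a + s"] a_nonneg b_nonneg s_nonneg by linarith
  also have "\<dots> \<le> K * (b + K * (a + s))"
    using le_K_mult a_nonneg b_nonneg s_nonneg K_ge_1 by simp
  also have "\<dots> \<le> K * (K * (b + K * (a + s)))"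
    using le_K_mult a_nonneg b_nonneg s_nonneg K_ge_1 by simp
  also have "\<dots> = K^2 * (b + K * (a + s))"
    by (simp add: power2_eq_square)
  finally have "a \<le> K^2 * (b + K * (a + s))" .
  then show ?thesis
    using assms qdiam_enlarged qdiam_\<A> unfolding absorbed_def
    by (auto intro: order_trans[OF _ ennreal_leI])
qed

lemma meeting_absorbed_far_from_\<B>:
  assumes "U \<subseteq> X" "qdiam \<rho> U \<le> ennreal s" "U \<inter> \<Union>\<B> = {}"
  shows "finite {C\<in>absorbed. C \<inter> U \<noteq> {}} \<and> card {C\<in>absorbed. C \<inter> U \<noteq> {}} \<le> m"
proof (rule meeting_card_le_image[OF mult_\<A> assms(1,2)])
  show "{C\<in>absorbed. C \<inter> U \<noteq> {}}
      \<subseteq> (\<lambda>A. if near A then enlarged (partner A) else A) ` {A\<in>\<A>. A \<inter> U \<noteq> {}}"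
  proof
    fix C assume C: "C \<in> {C\<in>absorbed. C \<inter> U \<noteq> {}}"
    then consider B where "B \<in> \<B>" "C = enlarged B" | "C \<in> \<A>" "\<not> near C"
      unfolding absorbed_def by blast
    then show "C \<in> (\<lambda>A. if near A then enlarged (partner A) else A) ` {A\<in>\<A>. A \<inter> U \<noteq> {}}"
    proof cases
      case 1
      with assms(3) C obtain A where "A \<in> \<A>" "near A" "partner A = B" "A \<inter> U \<noteq> {}"
        unfolding enlarged_def by blast
      with 1 show ?thesis by (intro image_eqI[of _ _ A]) auto
    next
      case 2
      with C show ?thesis by (intro image_eqI[of _ _ C]) auto
    qed
  qed
qed

definition halo :: "'a set \<Rightarrow> 'a set" where
  "halo U = {w\<in>\<Union>\<B>. \<exists>u\<in>U. \<rho> u w \<le> ennreal (K * (a + s))}"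

lemma qdiam_halo:
  assumes "U \<subseteq> X" "qdiam \<rho> U \<le> ennreal s"
  shows "qdiam \<rho> (halo U) \<le> ennreal (K^3 * (a + s))"
  unfolding qdiam_le_iff
proof (intro ballI)
  fix w w' assume "w \<in> halo U" "w' \<in> halo U"
  then obtain u u' where u: "u \<in> U" "u' \<in> U" "\<rho> u w \<le> ennreal (K * (a + s))"
    "\<rho> u' w' \<le> ennreal (K * (a + s))" unfolding halo_def by blast
  have X: "w \<in> X" "w' \<in> X" "u \<in> X" "u' \<in> X"
    using \<open>w \<in> halo U\<close> \<open>w' \<in> halo U\<close> u Union_\<B> assms(1) unfolding halo_def by blast+
  have r: "s \<le> K * (a + s)" "K * (a + s) \<le> K * (K * (a + s))"
    using le_K_mult[of "a + s"] le_K_mult[of "K * (a + s)"] K_ge_1 a_nonneg s_nonneg by auto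
  have "\<rho> u u' \<le> ennreal (K * (a + s))"
    using assms(2) u(1,2) r(1) by (auto simp: qdiam_le_iff intro: order_trans[OF _ ennreal_leI])
  then have uw': "\<rho> u w' \<le> ennreal (K * (K * (a + s)))"
    using u(4) by (rule quasi_triangle_le[OF X(3,2,4)])
  have wu: "\<rho> w u \<le> ennreal (K * (K * (a + s)))"
    using u(3) r(2) symmetric[OF X(1,3)] by (auto intro: order_trans[OF _ ennreal_leI])
  have "\<rho> w w' \<le> ennreal (K * (K * (K * (a + s))))"
    by (rule quasi_triangle_le[OF X(1,2,3) wu uw'])
  then show "\<rho> w w' \<le> ennreal (K^3 * (a + s))"
    by (simp add: power3_eq_cube mult.assoc)
qed

lemma meeting_absorbed_near_\<B>:
  assumes "U \<subseteq> X" "qdiam \<rho> U \<le> ennreal s" "U \<inter> \<Union>\<B> \<noteq> {}"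
  shows "finite {C\<in>absorbed. C \<inter> U \<noteq> {}} \<and> card {C\<in>absorbed. C \<inter> U \<noteq> {}} \<le> m"
proof (rule meeting_card_le_image[OF mult_\<B> _ qdiam_halo[OF assms(1,2)]])
  show "halo U \<subseteq> X"
    using Union_\<B> unfolding halo_def by blast
  show "{C\<in>absorbed. C \<inter> U \<noteq> {}} \<subseteq> enlarged ` {B\<in>\<B>. B \<inter> halo U \<noteq> {}}"
  proof
    fix C assume C: "C \<in> {C\<in>absorbed. C \<inter> U \<noteq> {}}"
    then obtain u where u: "u \<in> C" "u \<in> U" by blast
    obtain y where y: "y \<in> U" "y \<in> \<Union>\<B>" using assms(3) by blast
    have "\<rho> u y \<le> ennreal s"
      using assms(2) u(2) y(1) by (auto simp: qdiam_le_iff)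
    then have "\<not> (C \<in> \<A> \<and> \<not> near C)"
      using u y unfolding near_def by blast
    then obtain B where B: "B \<in> \<B>" "C = enlarged B"
      using C unfolding absorbed_def by blast
    then obtain w where "w \<in> B" "\<rho> u w \<le> ennreal (K * (a + s))"
      using enlarged_close u by blast
    with B u show "C \<in> enlarged ` {B\<in>\<B>. B \<inter> halo U \<noteq> {}}"
      unfolding halo_def by blast
  qed
qed

lemma mult_le_absorbed: "mult_le X \<rho> s absorbed m"
  unfolding mult_le_def
proof (intro allI impI)
  fix U assume U: "U \<subseteq> X" "qdiam \<rho> U \<le> ennreal s"
  show "finite {C\<in>absorbed. C \<inter> U \<noteq> {}} \<and> card {C\<in>absorbed. C \<inter> U \<noteq> {}} \<le> m"
  proof (cases "U \<inter> \<Union>\<B> = {}")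
    case True
    with U show ?thesis by (rule meeting_absorbed_far_from_\<B>)
  next
    case False
    with U show ?thesis by (rule meeting_absorbed_near_\<B>)
  qed
qed

end

lemma (in quasi_pseudometric) absorb_families:
  assumes "0 \<le> s" "0 \<le> a" "0 \<le> b" "\<Union>\<A> \<subseteq> X" "\<Union>\<B> \<subseteq> X"
    and "\<forall>A\<in>\<A>. qdiam \<rho> A \<le> ennreal a" "mult_le X \<rho> s \<A> m"
    and "\<forall>B\<in>\<B>. qdiam \<rho> B \<le> ennreal b" "mult_le X \<rho> (K^3 * (a + s)) \<B> m"
  shows "\<exists>\<C>. \<Union>\<C> = \<Union>\<A> \<union> \<Union>\<B> \<and> (\<forall>C\<in>\<C>. qdiam \<rho> C \<le> ennreal (K^2 * (b + K * (a + s))))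
    \<and> mult_le X \<rho> s \<C> m"
proof -
  interpret absorption X K \<rho> s a b \<A> \<B> m
    using assms by unfold_locales auto
  show ?thesis
    using Union_absorbed qdiam_absorbed mult_le_absorbed by (intro exI[of _ absorbed]) simp
qed

lemma floor_log_bounds:
  fixes M r :: real
  assumes "1 < M" "0 < r"
  shows "M powr of_int \<lfloor>log M r\<rfloor> \<le> r" "r < M powr (of_int \<lfloor>log M r\<rfloor> + 1)"
proof -
  have "M powr of_int \<lfloor>log M r\<rfloor> \<le> M powr (log M r)"
    using assms by (intro powr_mono) auto
  then show "M powr of_int \<lfloor>log M r\<rfloor> \<le> r"
    using assms by simp
  have "M powr (log M r) < M powr (of_int \<lfloor>log M r\<rfloor> + 1)"
    using assms by (intro powr_less_mono) linarith+
  then show "r < M powr (of_int \<lfloor>log M r\<rfloor> + 1)"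
    using assms by simp
qed

definition nagata_dim_le :: "'a set \<Rightarrow> ('a \<Rightarrow> 'a \<Rightarrow> ennreal) \<Rightarrow> 'a set \<Rightarrow> nat \<Rightarrow> bool" where
  "nagata_dim_le X \<rho> Y n \<longleftrightarrow> (\<exists>c>0. \<forall>s>0. \<exists>\<B>. \<Union>\<B> = Y \<and>
     (\<forall>B\<in>\<B>. qdiam \<rho> B \<le> ennreal (c * s)) \<and> mult_le X \<rho> s \<B> (n + 1))"

lemma nagata_dim_eq_Inf:
  "nagata_dim X \<rho> pinf = Inf {enat n | n. nagata_dim_le X \<rho> (X - set_option pinf) n}"
  unfolding nagata_dim_def nagata_dim_le_def ..

(* sigma is rho rescaled by the weight g. The two instances used are (rho, sigma, g) = (d_o, d, d(.,o))
   and (d, d_o, 1/d(.,o)). *)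
locale weighted_comparison = quasi_pseudometric +
  fixes \<sigma> :: "'a \<Rightarrow> 'a \<Rightarrow> ennreal" and g :: "'a \<Rightarrow> ennreal" and Y Y' :: "'a set"
  assumes Y_subset: "Y \<subseteq> X"
    and weight_pos: "x \<in> Y \<Longrightarrow> 0 < g x"
    and finite_weight_in: "x \<in> Y \<Longrightarrow> g x < top \<Longrightarrow> x \<in> Y'"
    and comparison: "x \<in> Y \<Longrightarrow> y \<in> Y \<Longrightarrow> g x < top \<Longrightarrow> g y < top \<Longrightarrow> \<sigma> x y = \<rho> x y * (g x * g y)"
    and separation: "x \<in> Y \<Longrightarrow> y \<in> Y \<Longrightarrow> g x < top \<Longrightarrow> ennreal K * g x < g y \<Longrightarrow>
      1 \<le> ennreal K * g x * \<rho> x y"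
    and heavy_close: "0 < R \<Longrightarrow> x \<in> Y \<Longrightarrow> y \<in> Y \<Longrightarrow> ennreal R \<le> g x \<Longrightarrow> ennreal R \<le> g y \<Longrightarrow>
      \<rho> x y \<le> ennreal (K / R)"
begin

definition level :: "'a \<Rightarrow> int" where
  "level x = \<lfloor>log (2 * K) (enn2real (g x))\<rfloor>"

definition band :: "real \<Rightarrow> int \<Rightarrow> 'a set" where
  "band R j = {x\<in>Y. g x < ennreal R \<and> level x mod 2 = j}"

definition layer :: "real \<Rightarrow> int \<Rightarrow> int \<Rightarrow> 'a set" where
  "layer R j k = {x\<in>band R j. level x = k}"

lemma finite_weight:
  assumes "x \<in> Y" "g x < top"
  shows "g x = ennreal (enn2real (g x))" "0 < enn2real (g x)"
  using assms weight_pos[OF assms(1)] by (auto simp: enn2real_positive_iff)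

lemma level_bounds:
  assumes "x \<in> Y" "g x < top"
  shows "(2 * K) powr of_int (level x) \<le> enn2real (g x)"
    and "enn2real (g x) < (2 * K) powr (of_int (level x) + 1)"
  using floor_log_bounds[OF _ finite_weight(2)[OF assms]] K_ge_1 unfolding level_def by auto

lemma layer_comparison:
  assumes "x \<in> Y" "y \<in> Y" "g x < top" "g y < top" "level x = k" "level y = k"
  shows "ennreal ((2 * K) powr (2 * of_int k)) * \<rho> x y \<le> \<sigma> x y"
    and "\<sigma> x y \<le> ennreal ((2 * K) powr (2 * of_int k + 2)) * \<rho> x y"
proof -
  have eq: "\<sigma> x y = ennreal (enn2real (g x) * enn2real (g y)) * \<rho> x y"
    using comparison[OF assms(1-4)] finite_weight[OF assms(1,3)] finite_weight[OF assms(2,4)]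
    by (simp add: ennreal_mult mult.commute)
  have "(2 * K) powr (2 * of_int k) = (2 * K) powr of_int (level x) * (2 * K) powr of_int (level y)"
    using assms(5,6) by (simp add: powr_add[symmetric])
  also have "\<dots> \<le> enn2real (g x) * enn2real (g y)"
    using level_bounds(1)[OF assms(1,3)] level_bounds(1)[OF assms(2,4)] by (intro mult_mono) auto
  finally show "ennreal ((2 * K) powr (2 * of_int k)) * \<rho> x y \<le> \<sigma> x y"
    unfolding eq by (intro mult_right_mono ennreal_leI) auto
  have "enn2real (g x) * enn2real (g y)
      \<le> (2 * K) powr (of_int (level x) + 1) * (2 * K) powr (of_int (level y) + 1)"
    using level_bounds[OF assms(1,3)] level_bounds[OF assms(2,4)] finite_weight(2)[OF assms(2,4)]
    by (intro mult_mono) auto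
  also have "\<dots> = (2 * K) powr (2 * of_int k + 2)"
    using assms(5,6) by (simp add: powr_add[symmetric])
  finally show "\<sigma> x y \<le> ennreal ((2 * K) powr (2 * of_int k + 2)) * \<rho> x y"
    unfolding eq by (intro mult_right_mono ennreal_leI) auto
qed

lemma band_weight:
  assumes "x \<in> band R j"
  shows "x \<in> Y" "g x < top" "enn2real (g x) < R"
proof -
  show "x \<in> Y" "g x < top"
    using assms less_trans[OF _ ennreal_less_top] unfolding band_def by blast+
  then show "enn2real (g x) < R"
    using assms unfolding band_def by (simp add: enn2real_less_iff)
qed

lemma band_weight_gap:
  assumes "x \<in> band R j" "y \<in> band R j" "level x < level y"
  shows "K * enn2real (g x) < enn2real (g y)"
proof -
  note x = band_weight[OF assms(1)] and y = band_weight[OF assms(2)]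
  define M where "M = 2 * K"
  have M: "1 < M" "K \<le> M" using K_ge_1 unfolding M_def by auto
  have "level x mod 2 = level y mod 2"
    using assms(1,2) unfolding band_def by simp
  then have "level x + 2 \<le> level y"
    using assms(3) by presburger
  then have gap: "M powr (of_int (level x) + 2) \<le> M powr of_int (level y)"
    using M by (intro powr_mono) auto
  have "K * enn2real (g x) < M * M powr (of_int (level x) + 1)"
    using level_bounds(2)[OF x(1,2)] M K_ge_1 unfolding M_def
    by (intro mult_le_less_imp_less) auto
  also have "\<dots> = M powr (of_int (level x) + 2)"
    using M by (simp add: powr_add powr_numeral power2_eq_square)
  also have "\<dots> \<le> enn2real (g y)"
    using gap level_bounds(1)[OF y(1,2)] unfolding M_def by linarith
  finally show ?thesis .
qed

lemma band_level_gap: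
  assumes "x \<in> band R j" "y \<in> band R j" "level x < level y" "0 < s" "K * s * R \<le> 1"
  shows "ennreal s < \<rho> x y"
proof (rule ccontr)
  assume "\<not> ennreal s < \<rho> x y"
  then have close: "\<rho> x y \<le> ennreal s" by simp
  note x = band_weight[OF assms(1)] and y = band_weight[OF assms(2)]
  define w where "w = enn2real (g x)"
  have w: "g x = ennreal w" "0 < w" "w < R"
    using finite_weight[OF x(1,2)] x(3) unfolding w_def by auto
  have "ennreal (K * w) < ennreal (enn2real (g y))"
    using band_weight_gap[OF assms(1-3)] w K_ge_1 unfolding w_def by (subst ennreal_less_iff) auto
  then have "ennreal K * g x < g y"
    using w K_ge_1 finite_weight(1)[OF y(1,2)] by (simp add: ennreal_mult')
  then have "1 \<le> ennreal K * g x * \<rho> x y"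
    using separation x y by blast
  also have "\<dots> \<le> ennreal K * g x * ennreal s"
    using close by (intro mult_left_mono) auto
  also have "\<dots> = ennreal (K * w * s)"
    using w K_ge_1 by (simp add: ennreal_mult')
  finally have "1 \<le> K * w * s"
    by (simp add: ennreal_ge_1)
  moreover have "K * w * s < K * R * s"
    using w K_ge_1 assms(4) by simp
  ultimately show False
    using assms(5) by (simp add: mult.commute mult.left_commute)
qed

lemma qdiam_layer:
  assumes "0 < s" "qdiam \<rho> U \<le> ennreal s"
  shows "qdiam \<sigma> (U \<inter> layer R j k) \<le> ennreal (s * (2 * K) powr (2 * of_int k + 2))"
  unfolding qdiam_le_iff
proof (intro ballI)
  fix x y assume "x \<in> U \<inter> layer R j k" "y \<in> U \<inter> layer R j k"
  then have xy: "x \<in> Y" "y \<in> Y" "g x < top" "g y < top" "level x = k" "level y = k" "x \<in> U" "y \<in> U"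
    using band_weight unfolding layer_def by auto
  have "\<sigma> x y \<le> ennreal ((2 * K) powr (2 * of_int k + 2)) * \<rho> x y"
    by (rule layer_comparison(2)[OF xy(1-6)])
  also have "\<dots> \<le> ennreal ((2 * K) powr (2 * of_int k + 2)) * ennreal s"
    using assms(2) xy(7,8) by (intro mult_left_mono) (auto simp: qdiam_le_iff)
  finally show "\<sigma> x y \<le> ennreal (s * (2 * K) powr (2 * of_int k + 2))"
    using assms(1) by (simp add: ennreal_mult' mult.commute)
qed

lemma band_same_level:
  assumes "x \<in> band R j" "y \<in> band R j" "\<rho> x y \<le> ennreal s" "0 < s" "K * s * R \<le> 1"
  shows "level x = level y"
proof -
  have "x \<in> X" "y \<in> X"
    using assms(1,2) band_weight(1) Y_subset by blast+
  then have "\<rho> y x \<le> ennreal s"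
    using assms(3) symmetric by simp
  then show ?thesis
    using band_level_gap[OF assms(1,2) _ assms(4,5)] band_level_gap[OF assms(2,1) _ assms(4,5)] assms(3)
    by fastforce
qed

lemma band_decomposition: "Y = band R 0 \<union> band R 1 \<union> {x\<in>Y. ennreal R \<le> g x}"
proof -
  have "level x mod 2 = 0 \<or> level x mod 2 = 1" for x
    by presburger
  then show ?thesis
    unfolding band_def by auto
qed

end

locale comparison_covers = weighted_comparison +
  fixes c :: real and D :: "real \<Rightarrow> 'a set set" and m :: nat
  assumes c_pos: "0 < c" and m_pos: "1 \<le> m"
    and Union_D: "0 < t \<Longrightarrow> \<Union>(D t) = Y'"
    and qdiam_D: "0 < t \<Longrightarrow> B \<in> D t \<Longrightarrow> qdiam \<sigma> B \<le> ennreal (c * t)"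
    and mult_D: "0 < t \<Longrightarrow> mult_le X \<sigma> t (D t) m"
begin

definition layered :: "real \<Rightarrow> real \<Rightarrow> int \<Rightarrow> 'a set set" where
  "layered s R j = (\<Union>k. (\<lambda>B. B \<inter> layer R j k) ` D (s * (2 * K) powr (2 * of_int k + 2)))"

lemma layered_subset_band: "C \<in> layered s R j \<Longrightarrow> C \<subseteq> band R j"
  unfolding layered_def layer_def by auto

lemma Union_layered:
  assumes "0 < s"
  shows "\<Union>(layered s R j) = band R j"
proof
  show "\<Union>(layered s R j) \<subseteq> band R j"
    using layered_subset_band by blast
  show "band R j \<subseteq> \<Union>(layered s R j)"
  proof
    fix x assume x: "x \<in> band R j"
    define t where "t = s * (2 * K) powr (2 * of_int (level x) + 2)"
    have "0 < t" using assms K_ge_1 unfolding t_def by simp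
    moreover have "x \<in> Y'"
      using finite_weight_in band_weight[OF x] by blast
    ultimately obtain B where "B \<in> D t" "x \<in> B"
      using Union_D by blast
    then show "x \<in> \<Union>(layered s R j)"
      using x unfolding layered_def layer_def t_def by blast
  qed
qed

lemma qdiam_layered:
  assumes "0 < s" "C \<in> layered s R j"
  shows "qdiam \<rho> C \<le> ennreal (c * (2 * K)^2 * s)"
proof -
  define M where "M = 2 * K"
  have M: "1 < M" using K_ge_1 unfolding M_def by simp
  obtain k B where B: "B \<in> D (s * M powr (2 * of_int k + 2))" "C = B \<inter> layer R j k"
    using assms(2) unfolding layered_def M_def by blast
  define e where "e = ennreal (M powr (2 * of_int k))"
  have e: "e \<noteq> 0" "e \<noteq> top"
    using M unfolding e_def by auto
  have "qdiam \<sigma> B \<le> ennreal (c * (s * M powr (2 * of_int k + 2)))"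
    using qdiam_D assms(1) B(1) M by simp
  also have "c * (s * M powr (2 * of_int k + 2)) = c * M^2 * s * M powr (2 * of_int k)"
    using M by (simp add: powr_add powr_numeral)
  also have "ennreal \<dots> = ennreal (c * M^2 * s) * e"
    using assms(1) c_pos unfolding e_def by (simp add: ennreal_mult')
  finally have qdiam_B: "qdiam \<sigma> B \<le> ennreal (c * M^2 * s) * e" .
  show ?thesis
    unfolding qdiam_le_iff
  proof (intro ballI)
    fix x y assume "x \<in> C" "y \<in> C"
    then have xy: "x \<in> Y" "y \<in> Y" "g x < top" "g y < top" "level x = k" "level y = k" "x \<in> B" "y \<in> B"
      using B(2) band_weight unfolding layer_def by auto
    have "e * \<rho> x y \<le> \<sigma> x y"
      using layer_comparison(1)[OF xy(1-6)] unfolding e_def M_def .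
    also have "\<dots> \<le> e * ennreal (c * M^2 * s)"
      using qdiam_B xy(7,8) by (auto simp: qdiam_le_iff mult.commute)
    finally show "\<rho> x y \<le> ennreal (c * (2 * K)^2 * s)"
      using ennreal_mult_le_mult_iff[OF e] unfolding M_def by blast
  qed
qed

lemma meeting_layered:
  assumes "0 < s" "K * s * R \<le> 1" "qdiam \<rho> U \<le> ennreal s" "u \<in> U" "u \<in> band R j"
  defines "k \<equiv> level u"
  shows "{C\<in>layered s R j. C \<inter> U \<noteq> {}}
    \<subseteq> (\<lambda>B. B \<inter> layer R j k) ` {B\<in>D (s * (2 * K) powr (2 * of_int k + 2)). B \<inter> (U \<inter> layer R j k) \<noteq> {}}"
proof
  fix C assume C: "C \<in> {C\<in>layered s R j. C \<inter> U \<noteq> {}}"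
  then obtain k' B where B: "B \<in> D (s * (2 * K) powr (2 * of_int k' + 2))" "C = B \<inter> layer R j k'"
    unfolding layered_def by blast
  then obtain v where v: "v \<in> B" "v \<in> layer R j k'" "v \<in> U"
    using C by blast
  have "\<rho> v u \<le> ennreal s"
    using assms(3) v(3) assms(4) by (auto simp: qdiam_le_iff)
  moreover have "v \<in> band R j" "level v = k'"
    using v(2) unfolding layer_def by auto
  ultimately have "k' = k"
    using band_same_level[OF _ assms(5) _ assms(1,2)] unfolding k_def by simp
  then show "C \<in> (\<lambda>B. B \<inter> layer R j k) ` {B\<in>D (s * (2 * K) powr (2 * of_int k + 2)). B \<inter> (U \<inter> layer R j k) \<noteq> {}}"
    using B v by blast
qed

lemma mult_le_layered:
  assumes "0 < s" "K * s * R \<le> 1"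
  shows "mult_le X \<rho> s (layered s R j) m"
  unfolding mult_le_def
proof (intro allI impI)
  fix U assume U: "U \<subseteq> X" "qdiam \<rho> U \<le> ennreal s"
  show "finite {C\<in>layered s R j. C \<inter> U \<noteq> {}} \<and> card {C\<in>layered s R j. C \<inter> U \<noteq> {}} \<le> m"
  proof (cases "U \<inter> band R j = {}")
    case True
    then have none: "{C\<in>layered s R j. C \<inter> U \<noteq> {}} = {}"
      using layered_subset_band by blast
    show ?thesis unfolding none by simp
  next
    case False
    then obtain u where u: "u \<in> U" "u \<in> band R j" by blast
    define t where "t = s * (2 * K) powr (2 * of_int (level u) + 2)"
    have "mult_le X \<sigma> t (D t) m"
      using assms(1) K_ge_1 unfolding t_def by (intro mult_D) simp
    moreover have "U \<inter> layer R j (level u) \<subseteq> X"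
      using U(1) by blast
    ultimately show ?thesis
      using qdiam_layer[OF assms(1) U(2)] meeting_layered[OF assms U(2) u] unfolding t_def
      by (rule meeting_card_le_image)
  qed
qed

definition scale_ratio :: real where
  "scale_ratio = K^3 * (c * (2 * K)^2 + 1)"

(* Small enough for band_level_gap at both scales s and scale_ratio * s. *)
definition heavy_threshold :: "real \<Rightarrow> real" where
  "heavy_threshold s = 1 / (K * (scale_ratio * s))"

definition bands_const :: real where
  "bands_const = K^2 * (c * (2 * K)^2 * scale_ratio + K * (c * (2 * K)^2 + 1))"

definition cover_const :: real where
  "cover_const = K^2 * (K^2 * scale_ratio + K * (bands_const + 1))"

lemma scale_ratio_ge_1: "1 \<le> scale_ratio"
  using c_pos K_ge_1 mult_mono[of 1 "K^3" 1 "c * (2 * K)^2 + 1"]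
  unfolding scale_ratio_def by (simp add: one_le_power)

lemma cover_const_pos: "0 < cover_const" "0 < bands_const"
  using scale_ratio_ge_1 c_pos K_ge_1 unfolding cover_const_def bands_const_def by (simp_all add: add_pos_pos)

lemma bands_cover:
  assumes "0 < s"
  shows "\<exists>\<C>. \<Union>\<C> = band (heavy_threshold s) 0 \<union> band (heavy_threshold s) 1
    \<and> (\<forall>C\<in>\<C>. qdiam \<rho> C \<le> ennreal (bands_const * s)) \<and> mult_le X \<rho> s \<C> m"
proof -
  define a L R where "a = c * (2 * K)^2" and "L = scale_ratio" and "R = heavy_threshold s"
  have L: "1 \<le> L" "0 < L * s"
    using scale_ratio_ge_1 assms unfolding L_def by simp_all
  have R: "K * s * R \<le> 1" "K * (L * s) * R \<le> 1"
    using assms L K_ge_1 unfolding R_def L_def heavy_threshold_def by (simp_all add: field_simps)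
  have X: "\<Union>(layered t R j) \<subseteq> X" for t j
    using layered_subset_band band_weight(1) Y_subset by blast
  have nonneg: "0 \<le> s" "0 \<le> a * s" "0 \<le> a * (L * s)"
    using assms c_pos L unfolding a_def by simp_all
  have qdiam: "\<forall>C\<in>layered s R 0. qdiam \<rho> C \<le> ennreal (a * s)"
    "\<forall>C\<in>layered (L * s) R 1. qdiam \<rho> C \<le> ennreal (a * (L * s))"
    using qdiam_layered assms L unfolding a_def by (simp_all add: mult.assoc)
  have "K^3 * (a * s + s) = L * s"
    unfolding a_def L_def scale_ratio_def by (simp add: algebra_simps)
  then have mult: "mult_le X \<rho> s (layered s R 0) m" "mult_le X \<rho> (K^3 * (a * s + s)) (layered (L * s) R 1) m"
    using mult_le_layered assms L R by simp_all
  have "K^2 * (a * (L * s) + K * (a * s + s)) = bands_const * s"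
    unfolding a_def L_def bands_const_def by (simp add: algebra_simps)
  then show ?thesis
    using absorb_families[OF nonneg X X qdiam(1) mult(1) qdiam(2) mult(2)]
    unfolding Union_layered[OF assms] Union_layered[OF L(2)] R_def by simp
qed

lemma full_cover:
  assumes "0 < s"
  shows "\<exists>\<B>. \<Union>\<B> = Y \<and> (\<forall>B\<in>\<B>. qdiam \<rho> B \<le> ennreal (cover_const * s)) \<and> mult_le X \<rho> s \<B> m"
proof -
  define R where "R = heavy_threshold s"
  define F where "F = {x\<in>Y. ennreal R \<le> g x}"
  obtain \<C> where \<C>: "\<Union>\<C> = band R 0 \<union> band R 1" "\<forall>C\<in>\<C>. qdiam \<rho> C \<le> ennreal (bands_const * s)"
    "mult_le X \<rho> s \<C> m"
    using bands_cover[OF assms, folded R_def] by (elim exE conjE) (rule that)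
  have R: "0 < R" "K / R = K^2 * scale_ratio * s"
    using assms scale_ratio_ge_1 K_ge_1 unfolding R_def heavy_threshold_def
    by (simp_all add: field_simps power2_eq_square)
  have nonneg: "0 \<le> s" "0 \<le> bands_const * s" "0 \<le> K^2 * scale_ratio * s"
    using assms cover_const_pos scale_ratio_ge_1 by simp_all
  have X: "\<Union>\<C> \<subseteq> X" "\<Union>{F} \<subseteq> X"
    using \<C>(1) band_weight(1) Y_subset unfolding F_def by blast+
  have qdiam_F: "\<forall>B\<in>{F}. qdiam \<rho> B \<le> ennreal (K^2 * scale_ratio * s)"
    using heavy_close[OF R(1)] R(2) unfolding F_def qdiam_le_iff by auto
  have "\<Union>\<C> \<union> \<Union>{F} = Y"
    using band_decomposition[of R] unfolding \<C>(1) F_def by simp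
  moreover have "K^2 * (K^2 * scale_ratio * s + K * (bands_const * s + s)) = cover_const * s"
    unfolding cover_const_def by (simp add: algebra_simps)
  ultimately show ?thesis
    using absorb_families[OF nonneg X \<C>(2,3) qdiam_F mult_le_singleton[OF m_pos]] by simp
qed

end

theorem (in weighted_comparison) nagata_dim_le_transfer:
  assumes "nagata_dim_le X \<sigma> Y' n"
  shows "nagata_dim_le X \<rho> Y n"
proof -
  obtain c where c: "0 < c" and covers: "\<forall>t>0. \<exists>\<B>. \<Union>\<B> = Y' \<and>
      (\<forall>B\<in>\<B>. qdiam \<sigma> B \<le> ennreal (c * t)) \<and> mult_le X \<sigma> t \<B> (n + 1)"
    using assms unfolding nagata_dim_le_def by blast
  define D where "D t = (SOME \<B>. \<Union>\<B> = Y' \<and>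
      (\<forall>B\<in>\<B>. qdiam \<sigma> B \<le> ennreal (c * t)) \<and> mult_le X \<sigma> t \<B> (n + 1))" for t
  have D: "\<Union>(D t) = Y' \<and> (\<forall>B\<in>D t. qdiam \<sigma> B \<le> ennreal (c * t)) \<and> mult_le X \<sigma> t (D t) (n + 1)"
    if "0 < t" for t
    unfolding D_def by (rule someI_ex) (use covers that in blast)
  interpret comparison_covers X K \<rho> \<sigma> g Y Y' c D "n + 1"
  proof
    show "0 < c" "1 \<le> n + 1" using c by simp_all
  qed (use D in simp_all)
  show ?thesis
    unfolding nagata_dim_le_def
  proof (intro exI[of _ cover_const] conjI allI impI)
    show "0 < cover_const" by (fact cover_const_pos(1))
  qed (fact full_cover)
qed

lemma le_max_divide:
  fixes x p q r k :: real
  assumes "x \<le> k * max p q" "0 < r" "0 \<le> k"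
  shows "x / r \<le> k * max (p / r) (q / r)"
proof -
  have "x / r \<le> k * max p q / r"
    using assms by (simp add: divide_right_mono)
  also have "\<dots> = k * (max p q / r)"
    by simp
  also have "\<dots> = k * max (p / r) (q / r)"
    using assms(2) by (subst max_divide_distrib_right) simp
  finally show ?thesis .
qed

lemma mult_le_square_mult:
  fixes x y p q K :: real
  assumes "0 \<le> x" "0 \<le> y" "x \<le> K * p" "y \<le> K * q"
  shows "x * y \<le> K^2 * (p * q)"
proof -
  have "x * y \<le> (K * p) * (K * q)"
    using assms by (intro mult_mono) auto
  then show ?thesis
    by (simp add: power2_eq_square algebra_simps)
qed

lemma quasi_ptolemy_ordered:
  fixes a b c u v w K :: real
  assumes "0 \<le> u" "0 \<le> c" "0 \<le> K" "w \<le> v"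
    and uvw: "u \<le> K * max v w" and cwb: "c \<le> K * max w b"
    and cva: "c \<le> K * max v a" and uab: "u \<le> K * max a b"
  shows "u * c \<le> K^2 * max (v * b) (w * a)"
proof -
  have uv: "u \<le> K * v"
    using uvw assms(4) by (simp add: max_def)
  have "u * c \<le> K^2 * (v * b) \<or> u * c \<le> K^2 * (w * a)"
  proof (cases "c \<le> K * b")
    case True
    then show ?thesis using mult_le_square_mult[OF assms(1,2) uv] by simp
  next
    case False
    then have cw: "c \<le> K * w"
      using cwb by (auto simp: max_def split: if_splits)
    show ?thesis
    proof (cases "b \<le> a")
      case True
      then have "u \<le> K * a" using uab by (simp add: max_def)
      then have "u * c \<le> K^2 * (a * w)"
        using cw by (rule mult_le_square_mult[OF assms(1,2)])
      then show ?thesis by (simp add: mult.commute)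
    next
      case False
      then have ub: "u \<le> K * b" using uab by (simp add: max_def)
      have "K * a \<le> K * b" using False assms(3) by (simp add: mult_left_mono)
      then have "c \<le> K * v"
        using cva \<open>\<not> c \<le> K * b\<close> by (auto simp: max_def split: if_splits)
      then have "u * c \<le> K^2 * (b * v)"
        by (rule mult_le_square_mult[OF assms(1,2) ub])
      then show ?thesis by (simp add: mult.commute)
    qed
  qed
  then show ?thesis
    using assms(3) by (smt (verit) max.cobounded1 max.cobounded2 mult_left_mono zero_le_power2)
qed

(* With u = d(x,y), v = d(x,z), w = d(z,y) and a, b, c the distances of x, y, z to the base point,
   this is the K^2-quasi-triangle inequality of the involution. *)
lemma quasi_ptolemy:
  fixes a b c u v w K :: real
  assumes "0 \<le> u" "0 \<le> c" "0 \<le> K"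
    and "u \<le> K * max v w" "c \<le> K * max w b" "c \<le> K * max v a" "u \<le> K * max a b"
  shows "u * c \<le> K^2 * max (v * b) (w * a)"
proof (cases "w \<le> v")
  case True
  then show ?thesis using quasi_ptolemy_ordered assms by blast
next
  case False
  then have "u * c \<le> K^2 * max (w * a) (v * b)"
    using quasi_ptolemy_ordered[of u c K v w a b] assms by (simp add: max.commute)
  then show ?thesis by (simp add: max.commute)
qed

lemma ennreal_le_mult_max:
  assumes "a \<le> k * max p q" "0 \<le> p" "0 \<le> q" "0 \<le> k"
  shows "ennreal a \<le> ennreal k * max (ennreal p) (ennreal q)"
proof -
  have "max (ennreal p) (ennreal q) = ennreal (max p q)"
    using assms(2,3) by (auto simp: max_def ennreal_le_iff)
  then show ?thesis
    using assms by (simp add: ennreal_mult'[symmetric] ennreal_leI)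
qed

lemma ennreal_le_mult_max_self:
  fixes k t u :: ennreal
  assumes "1 \<le> k"
  shows "t \<le> k * max u t" "t \<le> k * max t u"
proof -
  have "t \<le> max u t" "t \<le> max t u" by simp_all
  moreover have "max u t \<le> k * max u t" "max t u \<le> k * max t u"
    using mult_right_mono[OF assms, of "max u t"] mult_right_mono[OF assms, of "max t u"] by simp_all
  ultimately show "t \<le> k * max u t" "t \<le> k * max t u"
    by (meson order_trans)+
qed

locale pointed_quasi_metric =
  fixes X :: "'a set" and K :: real and d :: "'a \<Rightarrow> 'a \<Rightarrow> ennreal" and pinf :: "'a option"
    and p0 :: 'a
  assumes quasi_metric: "quasi_metric X K d pinf"
    and base_in: "p0 \<in> X" and base_finite: "Some p0 \<noteq> pinf"
begin

abbreviation Xf :: "'a set" where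
  "Xf \<equiv> X - set_option pinf"

abbreviation dinv :: "'a \<Rightarrow> 'a \<Rightarrow> ennreal" where
  "dinv \<equiv> involution d pinf p0"

lemma d_eq_0_iff: "x \<in> X \<Longrightarrow> y \<in> X \<Longrightarrow> d x y = 0 \<longleftrightarrow> x = y"
  using quasi_metric unfolding quasi_metric_def by (elim conjE) simp

sublocale quasi_pseudometric X K d
proof
  show "1 \<le> K"
    using quasi_metric unfolding quasi_metric_def by (elim conjE)
  show "d x y = d y x" if "x \<in> X" "y \<in> X" for x y
    using quasi_metric that unfolding quasi_metric_def by (elim conjE) simp
  show "d x y \<le> ennreal K * max (d x z) (d z y)" if "x \<in> X" "y \<in> X" "z \<in> X" for x y z
    using quasi_metric that unfolding quasi_metric_def by (elim conjE) simp
qed (simp add: d_eq_0_iff)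

lemma infinity_condition:
  "case pinf of None \<Rightarrow> (\<forall>x\<in>X. \<forall>y\<in>X. d x y < top)
     | Some p \<Rightarrow> p \<in> X \<and> (\<forall>x\<in>X. x \<noteq> p \<longrightarrow> d x p = top) \<and>
         (\<forall>x\<in>X. \<forall>y\<in>X. x \<noteq> p \<longrightarrow> y \<noteq> p \<longrightarrow> d x y < top) \<and>
         (\<forall>q\<in>X. (\<forall>x\<in>X. x \<noteq> q \<longrightarrow> d x q = top) \<longrightarrow> q = p)"
  using quasi_metric unfolding quasi_metric_def by (elim conjE)

lemma d_finite:
  assumes "x \<in> Xf" "y \<in> Xf"
  shows "d x y < top"
proof (cases pinf)
  case None
  then show ?thesis using infinity_condition assms by simp
next
  case (Some p)
  then have "\<forall>x\<in>X. \<forall>y\<in>X. x \<noteq> p \<longrightarrow> y \<noteq> p \<longrightarrow> d x y < top"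
    using infinity_condition by simp
  then show ?thesis using assms Some by simp
qed

lemma d_infinite:
  assumes "pinf = Some p" "x \<in> X" "x \<noteq> p"
  shows "d x p = top"
proof -
  have "\<forall>x\<in>X. x \<noteq> p \<longrightarrow> d x p = top"
    using infinity_condition assms(1) by simp
  then show ?thesis using assms(2,3) by simp
qed

lemma base_in_Xf: "p0 \<in> Xf"
  using base_in base_finite by (cases pinf) auto

(* Only meaningful on Xf: enn2real top = 0. *)
definition dr :: "'a \<Rightarrow> 'a \<Rightarrow> real" where
  "dr x y = enn2real (d x y)"

lemma d_ennreal: "x \<in> Xf \<Longrightarrow> y \<in> Xf \<Longrightarrow> d x y = ennreal (dr x y)"
  unfolding dr_def using d_finite by (simp add: less_top)

lemma dr_nonneg: "0 \<le> dr x y"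
  unfolding dr_def by simp

lemma dr_sym: "x \<in> Xf \<Longrightarrow> y \<in> Xf \<Longrightarrow> dr x y = dr y x"
  unfolding dr_def using symmetric by auto

lemma dr_pos: "x \<in> Xf \<Longrightarrow> y \<in> Xf \<Longrightarrow> x \<noteq> y \<Longrightarrow> 0 < dr x y"
  using d_eq_0_iff[of x y] d_ennreal[of x y] dr_nonneg[of x y] by fastforce

lemma dr_quasi_triangle:
  assumes "x \<in> Xf" "y \<in> Xf" "z \<in> Xf"
  shows "dr x y \<le> K * max (dr x z) (dr z y)"
proof -
  have "d x z \<le> ennreal (max (dr x z) (dr z y))" "d z y \<le> ennreal (max (dr x z) (dr z y))"
    using assms d_ennreal by (auto intro: ennreal_leI)
  then have "ennreal (dr x y) \<le> ennreal (K * max (dr x z) (dr z y))"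
    using quasi_triangle_le[of x y z] assms d_ennreal[of x y] by auto
  then show ?thesis
    using K_ge_1 dr_nonneg[of x z] by (simp add: ennreal_le_iff)
qed

lemma dinv_self: "dinv x x = 0"
  unfolding involution_def by simp

lemma dinv_sym: "x \<in> X \<Longrightarrow> y \<in> X \<Longrightarrow> dinv x y = dinv y x"
  unfolding involution_def using symmetric base_in by (auto simp: mult.commute)

lemma dinv_finite:
  assumes "x \<in> Xf" "y \<in> Xf" "x \<noteq> p0" "y \<noteq> p0" "x \<noteq> y"
  shows "dinv x y = ennreal (dr x y / (dr x p0 * dr y p0))"
proof -
  have "dinv x y = d x y / (d x p0 * d p0 y)"
    using assms unfolding involution_def by auto
  also have "\<dots> = ennreal (dr x y) / ennreal (dr x p0 * dr y p0)"
    using assms base_in_Xf d_ennreal dr_sym dr_nonneg by (simp add: ennreal_mult')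
  also have "\<dots> = ennreal (dr x y / (dr x p0 * dr y p0))"
    using dr_pos[OF assms(1) base_in_Xf assms(3)] dr_pos[OF assms(2) base_in_Xf assms(4)] dr_nonneg
    by (simp add: divide_ennreal)
  finally show ?thesis .
qed

lemma dinv_infinity:
  assumes "pinf = Some p" "y \<in> Xf" "y \<noteq> p0"
  shows "dinv p y = ennreal (1 / dr y p0)" "dinv y p = ennreal (1 / dr y p0)"
proof -
  have "d p0 y = ennreal (dr y p0)" "d y p0 = ennreal (dr y p0)" "0 < dr y p0"
    using d_ennreal dr_sym dr_pos assms(2,3) base_in_Xf by auto
  moreover have "y \<noteq> p" using assms by auto
  ultimately show "dinv p y = ennreal (1 / dr y p0)" "dinv y p = ennreal (1 / dr y p0)"
    using assms unfolding involution_def by (auto simp: divide_ennreal[symmetric])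
qed

lemma dinv_base:
  assumes "x \<in> X" "x \<noteq> p0"
  shows "dinv p0 x = top" "dinv x p0 = top"
proof -
  have "d p0 p0 = 0" "d x p0 \<noteq> 0" "d p0 x \<noteq> 0"
    using d_eq_0_iff assms base_in by auto
  then show "dinv p0 x = top" "dinv x p0 = top"
    using assms base_finite unfolding involution_def by auto
qed

lemma dinv_triangle_infinity_left:
  assumes "pinf = Some x" "y \<in> Xf" "z \<in> Xf" "y \<noteq> p0" "z \<noteq> p0" "y \<noteq> z"
  shows "dinv x y \<le> ennreal (K^2) * max (dinv x z) (dinv z y)"
proof -
  define b c w where "b = dr y p0" and "c = dr z p0" and "w = dr z y"
  have pos: "0 < b" "0 < c" "0 \<le> w"
    using dr_pos assms(2-5) base_in_Xf dr_nonneg unfolding b_def c_def w_def by auto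
  have "c \<le> K * max w b"
    using dr_quasi_triangle[OF assms(3) base_in_Xf assms(2)] unfolding b_def c_def w_def .
  also have "\<dots> \<le> K^2 * max b w"
    using K_ge_1 pos by (simp add: max.commute power2_eq_square mult_right_mono)
  finally have "c / (c * b) \<le> K^2 * max (b / (c * b)) (w / (c * b))"
    using pos by (intro le_max_divide) auto
  then have "1 / b \<le> K^2 * max (1 / c) (w / (c * b))"
    using pos by simp
  moreover have "dinv x y = ennreal (1 / b)" "dinv x z = ennreal (1 / c)"
    "dinv z y = ennreal (w / (c * b))"
    using dinv_infinity[OF assms(1)] dinv_finite assms unfolding b_def c_def w_def by auto
  ultimately show ?thesis
    using pos by (simp add: ennreal_le_mult_max)
qed

lemma dinv_triangle_infinity_middle:
  assumes "pinf = Some z" "x \<in> Xf" "y \<in> Xf" "x \<noteq> p0" "y \<noteq> p0" "x \<noteq> y"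
  shows "dinv x y \<le> ennreal (K^2) * max (dinv x z) (dinv z y)"
proof -
  define a b u where "a = dr x p0" and "b = dr y p0" and "u = dr x y"
  have pos: "0 < a" "0 < b" "0 \<le> u"
    using dr_pos assms(2-5) base_in_Xf dr_nonneg unfolding a_def b_def u_def by auto
  have "u \<le> K * max a b"
    using dr_quasi_triangle[OF assms(2,3) base_in_Xf] dr_sym[OF base_in_Xf assms(3)]
    unfolding a_def b_def u_def by simp
  also have "\<dots> \<le> K^2 * max b a"
    using K_ge_1 pos by (simp add: max.commute power2_eq_square mult_right_mono)
  finally have "u / (a * b) \<le> K^2 * max (b / (a * b)) (a / (a * b))"
    using pos by (intro le_max_divide) auto
  then have "u / (a * b) \<le> K^2 * max (1 / a) (1 / b)"
    using pos by simp
  moreover have "dinv x y = ennreal (u / (a * b))" "dinv x z = ennreal (1 / a)"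
    "dinv z y = ennreal (1 / b)"
    using dinv_infinity[OF assms(1)] dinv_finite assms unfolding a_def b_def u_def by auto
  ultimately show ?thesis
    using pos by (simp add: ennreal_le_mult_max)
qed

lemma dinv_triangle_finite:
  assumes "x \<in> Xf" "y \<in> Xf" "z \<in> Xf" "x \<noteq> p0" "y \<noteq> p0" "z \<noteq> p0"
    and "x \<noteq> y" "x \<noteq> z" "z \<noteq> y"
  shows "dinv x y \<le> ennreal (K^2) * max (dinv x z) (dinv z y)"
proof -
  define a b c u v w where "a = dr x p0" and "b = dr y p0" and "c = dr z p0"
    and "u = dr x y" and "v = dr x z" and "w = dr z y"
  have pos: "0 < a" "0 < b" "0 < c" "0 \<le> u" "0 \<le> v" "0 \<le> w"
    using dr_pos assms(1-6) base_in_Xf dr_nonneg unfolding a_def b_def c_def u_def v_def w_def by auto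
  have "u * c \<le> K^2 * max (v * b) (w * a)"
  proof (rule quasi_ptolemy)
    show "0 \<le> u" "0 \<le> c" "0 \<le> K"
      using pos K_ge_1 by simp_all
    show "u \<le> K * max v w"
      using dr_quasi_triangle[OF assms(1-3)] unfolding u_def v_def w_def .
    show "c \<le> K * max w b"
      using dr_quasi_triangle[OF assms(3) base_in_Xf assms(2)] unfolding b_def c_def w_def .
    show "c \<le> K * max v a"
      using dr_quasi_triangle[OF assms(3) base_in_Xf assms(1)] dr_sym[OF assms(3,1)]
      unfolding a_def c_def v_def by simp
    show "u \<le> K * max a b"
      using dr_quasi_triangle[OF assms(1,2) base_in_Xf] dr_sym[OF base_in_Xf assms(2)]
      unfolding a_def b_def u_def by simp
  qed
  then have "u * c / (a * b * c) \<le> K^2 * max (v * b / (a * b * c)) (w * a / (a * b * c))"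
    using pos by (intro le_max_divide) auto
  then have "u / (a * b) \<le> K^2 * max (v / (a * c)) (w / (c * b))"
    using pos by (simp add: field_simps)
  moreover have "dinv x y = ennreal (u / (a * b))" "dinv x z = ennreal (v / (a * c))"
    "dinv z y = ennreal (w / (c * b))"
    using dinv_finite assms unfolding a_def b_def c_def u_def v_def w_def by auto
  ultimately show ?thesis
    using pos by (simp add: ennreal_le_mult_max)
qed

lemma dinv_triangle_off_base:
  assumes "x \<in> X" "y \<in> X" "z \<in> X" "x \<noteq> p0" "y \<noteq> p0" "z \<noteq> p0"
    and "x \<noteq> y" "z \<noteq> x" "z \<noteq> y"
  shows "dinv x y \<le> ennreal (K^2) * max (dinv x z) (dinv z y)"
proof -
  consider "pinf = Some x" | "pinf = Some y" | "pinf = Some z" | "x \<in> Xf" "y \<in> Xf" "z \<in> Xf"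
    using assms(1-3) by (cases pinf) auto
  then show ?thesis
  proof cases
    case 1
    then show ?thesis
      using dinv_triangle_infinity_left assms by auto
  next
    case 2
    then have "dinv y x \<le> ennreal (K^2) * max (dinv y z) (dinv z x)"
      using dinv_triangle_infinity_left assms by auto
    then show ?thesis
      using dinv_sym assms by (simp add: max.commute)
  next
    case 3
    then show ?thesis
      using dinv_triangle_infinity_middle assms by auto
  next
    case 4
    then show ?thesis
      using dinv_triangle_finite assms by auto
  qed
qed

lemma dinv_quasi_triangle:
  assumes "x \<in> X" "y \<in> X" "z \<in> X"
  shows "dinv x y \<le> ennreal (K^2) * max (dinv x z) (dinv z y)"
proof -
  have K2: "1 \<le> ennreal (K^2)"
    using K_ge_1 by (simp add: one_le_power)
  consider "x = y" | "z = x \<or> z = y" | "p0 \<in> {x, y, z}" "x \<noteq> y" "z \<noteq> x" "z \<noteq> y"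
    | "p0 \<notin> {x, y, z}" "x \<noteq> y" "z \<noteq> x" "z \<noteq> y"
    by blast
  then show ?thesis
  proof cases
    case 1
    then show ?thesis by (simp add: dinv_self)
  next
    case 2
    then show ?thesis
      using ennreal_le_mult_max_self[OF K2] by (auto simp: dinv_self)
  next
    case 3
    then have "dinv x z = top \<or> dinv z y = top"
      using dinv_base assms by auto
    moreover have "ennreal (K^2) \<noteq> 0"
      using K2 by auto
    ultimately show ?thesis
      by (auto simp: max_def ennreal_mult_eq_top_iff top_unique)
  next
    case 4
    then show ?thesis
      using dinv_triangle_off_base assms by auto
  qed
qed

lemma quasi_pseudometric_dinv: "quasi_pseudometric X (K^2) dinv"
  using K_ge_1 dinv_sym dinv_self dinv_quasi_triangle
  by unfold_locales (simp_all add: one_le_power)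

lemma finite_base_dist_in_Xf:
  assumes "x \<in> X" "d x p0 < top"
  shows "x \<in> Xf"
proof (rule ccontr)
  assume "x \<notin> Xf"
  then have "pinf = Some x" using assms(1) by (cases pinf) auto
  then have "d p0 x = top" using d_infinite base_in base_finite by auto
  then show False using assms symmetric base_in by simp
qed

lemma d_eq_dinv_mult:
  assumes "x \<in> X - {p0}" "y \<in> X - {p0}" "d x p0 < top" "d y p0 < top"
  shows "d x y = dinv x y * (d x p0 * d y p0)"
proof (cases "x = y")
  case True
  then show ?thesis using assms(1) self_zero by (simp add: dinv_self)
next
  case False
  have Xf: "x \<in> Xf" "y \<in> Xf"
    using finite_base_dist_in_Xf assms by auto
  have pos: "0 < dr x p0" "0 < dr y p0"
    using dr_pos Xf base_in_Xf assms(1,2) by auto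
  have "dinv x y * (d x p0 * d y p0)
      = ennreal (dr x y / (dr x p0 * dr y p0)) * ennreal (dr x p0 * dr y p0)"
    using dinv_finite[OF Xf] d_ennreal Xf base_in_Xf assms(1,2) False dr_nonneg
    by (simp add: ennreal_mult')
  also have "\<dots> = ennreal (dr x y)"
    using pos dr_nonneg by (simp add: ennreal_mult'[symmetric])
  finally show ?thesis
    using d_ennreal[OF Xf] by simp
qed

lemma dinv_separation:
  assumes "x \<in> X - {p0}" "y \<in> X - {p0}" "d x p0 < top" "ennreal (K^2) * d x p0 < d y p0"
  shows "1 \<le> ennreal (K^2) * d x p0 * dinv x y"
proof -
  have x: "x \<in> Xf" "0 < dr x p0" "d x p0 = ennreal (dr x p0)"
    using finite_base_dist_in_Xf assms(1,3) dr_pos base_in_Xf d_ennreal by auto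
  show ?thesis
  proof (cases "pinf = Some y")
    case True
    then have "ennreal (K^2) * d x p0 * dinv x y = ennreal (K^2)"
      using dinv_infinity(2)[OF True] x assms(1) K_ge_1 by (simp add: ennreal_mult'[symmetric])
    then show ?thesis
      using K_ge_1 by (simp add: one_le_power)
  next
    case False
    then have "y \<in> Xf"
      using assms(2) by (cases pinf) auto
    then have y: "y \<in> Xf" "0 < dr y p0"
      using assms(2) dr_pos base_in_Xf by auto
    have less: "K^2 * dr x p0 < dr y p0"
      using assms(4) x d_ennreal[OF y(1) base_in_Xf] K_ge_1 by (simp add: ennreal_mult'[symmetric] ennreal_less_iff)
    moreover have "dr x p0 \<le> K^2 * dr x p0"
      using x(2) K_ge_1 by (simp add: one_le_power)
    ultimately have "x \<noteq> y"
      by auto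
    have "K * dr x p0 \<le> K^2 * dr x p0"
      using K_ge_1 x(2) by (simp add: power2_eq_square mult_right_mono)
    then have "dr y p0 \<le> K * dr x y"
      using dr_quasi_triangle[OF y(1) base_in_Xf x(1)] dr_sym[OF y(1) x(1)] less
      by (auto simp: max_def split: if_splits)
    also have "\<dots> \<le> K^2 * dr x y"
      using K_ge_1 dr_nonneg[of x y] by (simp add: power2_eq_square mult_right_mono)
    finally have "1 \<le> K^2 * dr x p0 * (dr x y / (dr x p0 * dr y p0))"
      using x(2) y(2) by (simp add: field_simps)
    then show ?thesis
      using dinv_finite[OF x(1) y(1)] x y assms(1,2) \<open>x \<noteq> y\<close> dr_nonneg K_ge_1
      by (simp add: ennreal_mult'[symmetric])
  qed
qed

lemma inverse_dr_le:
  assumes "0 < R" "w \<in> Xf" "ennreal R \<le> d w p0"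
  shows "1 / dr w p0 \<le> 1 / R"
proof -
  have "R \<le> dr w p0"
    using assms d_ennreal[OF assms(2) base_in_Xf] dr_nonneg by simp
  then show ?thesis
    using assms(1) by (intro divide_left_mono) auto
qed

lemma dinv_le_inverse_max:
  assumes "x \<in> Xf" "y \<in> Xf" "x \<noteq> p0" "y \<noteq> p0" "x \<noteq> y"
  shows "dinv x y \<le> ennreal (K * max (1 / dr x p0) (1 / dr y p0))"
proof -
  define a b where "a = dr x p0" and "b = dr y p0"
  have ab: "0 < a" "0 < b"
    using dr_pos assms base_in_Xf unfolding a_def b_def by auto
  have "dr x y \<le> K * max b a"
    using dr_quasi_triangle[OF assms(1,2) base_in_Xf] dr_sym[OF base_in_Xf assms(2)]
    unfolding a_def b_def by (simp add: max.commute)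
  then have "dr x y / (a * b) \<le> K * max (b / (a * b)) (a / (a * b))"
    using ab K_ge_1 by (intro le_max_divide) auto
  then show ?thesis
    using dinv_finite[OF assms] ab unfolding a_def b_def by (simp add: ennreal_leI)
qed

lemma dinv_heavy_close:
  assumes "0 < R" "x \<in> X - {p0}" "y \<in> X - {p0}" "ennreal R \<le> d x p0" "ennreal R \<le> d y p0"
  shows "dinv x y \<le> ennreal (K^2 / R)"
proof -
  have "1 \<le> K^2" "K \<le> K^2"
    using K_ge_1 le_K_mult[of K] by (simp add: one_le_power, simp add: power2_eq_square)
  then have le: "1 / R \<le> K^2 / R" "K * (1 / R) \<le> K^2 / R"
    using assms(1) by (simp_all add: divide_right_mono)
  consider "x = y" | "pinf = Some x" "y \<in> Xf" | "pinf = Some y" "x \<in> Xf" | "x \<in> Xf" "y \<in> Xf" "x \<noteq> y"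
    using assms(2,3) by (cases pinf) auto
  then show ?thesis
  proof cases
    case 1
    then show ?thesis by (simp add: dinv_self)
  next
    case 2
    then show ?thesis
      using dinv_infinity(1) inverse_dr_le[OF assms(1) 2(2) assms(5)] le assms by (simp add: ennreal_leI)
  next
    case 3
    then show ?thesis
      using dinv_infinity(2) inverse_dr_le[OF assms(1) 3(2) assms(4)] le assms by (simp add: ennreal_leI)
  next
    case 4
    have "K * max (1 / dr x p0) (1 / dr y p0) \<le> K * (1 / R)"
      using inverse_dr_le[OF assms(1) 4(1) assms(4)] inverse_dr_le[OF assms(1) 4(2) assms(5)] K_ge_1
      by (intro mult_left_mono) auto
    then show ?thesis
      using dinv_le_inverse_max[OF 4(1,2) _ _ 4(3)] assms(2,3) le(2)
      by (auto intro: order_trans[OF _ ennreal_leI])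
  qed
qed

lemma weighted_comparison_dinv: "weighted_comparison X (K^2) dinv d (\<lambda>x. d x p0) (X - {p0}) Xf"
proof (intro weighted_comparison.intro quasi_pseudometric_dinv weighted_comparison_axioms.intro)
  show "x \<in> X - {p0} \<Longrightarrow> 0 < d x p0" for x
    using d_eq_0_iff base_in by (auto simp: zero_less_iff_neq_zero)
qed (use finite_base_dist_in_Xf d_eq_dinv_mult dinv_separation dinv_heavy_close in auto)

lemma inverse_base_dist:
  assumes "x \<in> Xf" "x \<noteq> p0"
  shows "1 / d x p0 = ennreal (1 / dr x p0)"
  using d_ennreal[OF assms(1) base_in_Xf] dr_pos[OF assms(1) base_in_Xf assms(2)] divide_ennreal[of 1 "dr x p0"]
  by simp

lemma finite_inverse_base_dist:
  assumes "x \<in> Xf" "1 / d x p0 < top"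
  shows "x \<noteq> p0"
  using assms self_zero base_in by auto

lemma dinv_eq_d_mult:
  assumes "x \<in> Xf" "y \<in> Xf" "1 / d x p0 < top" "1 / d y p0 < top"
  shows "dinv x y = d x y * (1 / d x p0 * (1 / d y p0))"
proof (cases "x = y")
  case True
  then show ?thesis using assms(1) self_zero by (simp add: dinv_self)
next
  case False
  have ne: "x \<noteq> p0" "y \<noteq> p0"
    using finite_inverse_base_dist assms by auto
  have "d x y * (1 / d x p0 * (1 / d y p0)) = ennreal (dr x y) * (ennreal (1 / dr x p0) * ennreal (1 / dr y p0))"
    using d_ennreal[OF assms(1,2)] inverse_base_dist assms(1,2) ne by simp
  also have "\<dots> = ennreal (dr x y / (dr x p0 * dr y p0))"
    by (simp add: ennreal_mult'[symmetric] dr_nonneg)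
  finally show ?thesis
    using dinv_finite[OF assms(1,2) ne False] by simp
qed

lemma d_separation:
  assumes "x \<in> Xf" "y \<in> Xf" "1 / d x p0 < top" "ennreal K * (1 / d x p0) < 1 / d y p0"
  shows "1 \<le> ennreal K * (1 / d x p0) * d x y"
proof -
  have x: "x \<noteq> p0" "0 < dr x p0" "1 / d x p0 = ennreal (1 / dr x p0)"
    using finite_inverse_base_dist inverse_base_dist dr_pos base_in_Xf assms(1,3) by auto
  have "1 \<le> K * (1 / dr x p0) * dr x y"
  proof (cases "y = p0")
    case True
    then show ?thesis using x(2) K_ge_1 by simp
  next
    case False
    have y: "0 < dr y p0" "1 / d y p0 = ennreal (1 / dr y p0)"
      using inverse_base_dist dr_pos base_in_Xf assms(2) False by auto
    have "K * (1 / dr x p0) < 1 / dr y p0"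
      using assms(4) x y K_ge_1 by (simp add: ennreal_mult'[symmetric] ennreal_less_iff)
    then have "K * dr y p0 < dr x p0"
      using x(2) y(1) by (simp add: field_simps)
    then have "dr x p0 \<le> K * dr x y"
      using dr_quasi_triangle[OF assms(1) base_in_Xf assms(2)] dr_sym[OF base_in_Xf assms(2)]
      by (auto simp: max_def split: if_splits)
    then show ?thesis
      using x(2) by (simp add: field_simps)
  qed
  then show ?thesis
    using x(3) d_ennreal[OF assms(1,2)] K_ge_1 x(2) dr_nonneg
    by (simp add: ennreal_mult'[symmetric] ennreal_ge_1)
qed

lemma d_heavy_close:
  assumes "0 < R" "x \<in> Xf" "y \<in> Xf" "ennreal R \<le> 1 / d x p0" "ennreal R \<le> 1 / d y p0"
  shows "d x y \<le> ennreal (K / R)"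
proof -
  have le: "dr w p0 \<le> 1 / R" if "w \<in> Xf" "ennreal R \<le> 1 / d w p0" for w
  proof (cases "w = p0")
    case True
    then show ?thesis using assms(1) self_zero base_in by (simp add: dr_def)
  next
    case False
    then have "R \<le> 1 / dr w p0"
      using that inverse_base_dist dr_nonneg by (simp add: ennreal_le_iff)
    then show ?thesis
      using dr_pos[OF that(1) base_in_Xf False] assms(1) by (simp add: field_simps)
  qed
  have "dr x y \<le> K * max (dr x p0) (dr p0 y)"
    by (rule dr_quasi_triangle[OF assms(2,3) base_in_Xf])
  also have "\<dots> \<le> K * (1 / R)"
    using le[OF assms(2,4)] le[OF assms(3,5)] dr_sym[OF base_in_Xf assms(3)] K_ge_1
    by (intro mult_left_mono) auto
  finally show ?thesis
    using d_ennreal[OF assms(2,3)] by (simp add: ennreal_leI)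
qed

lemma weighted_comparison_d: "weighted_comparison X K d dinv (\<lambda>x. 1 / d x p0) Xf (X - {p0})"
proof (intro weighted_comparison.intro weighted_comparison_axioms.intro)
  show "quasi_pseudometric X K d"
    by unfold_locales
  show "x \<in> Xf \<Longrightarrow> 0 < 1 / d x p0" for x
    using d_finite base_in_Xf by (simp add: ennreal_zero_less_divide)
qed (use finite_inverse_base_dist dinv_eq_d_mult d_separation d_heavy_close in auto)

end

theorem proposition3p2:
  fixes X :: "'a set" and K :: real and d :: "'a \<Rightarrow> 'a \<Rightarrow> ennreal"
    and pinf :: "'a option" and p0 :: 'a
  assumes "quasi_metric X K d pinf"
    and "p0 \<in> X" and "Some p0 \<noteq> pinf"
  shows "nagata_dim X d pinf = nagata_dim X (involution d pinf p0) (Some p0)"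
proof -
  interpret pointed_quasi_metric X K d pinf p0
    using assms by unfold_locales
  have "nagata_dim_le X d Xf n \<longleftrightarrow> nagata_dim_le X (involution d pinf p0) (X - {p0}) n" for n
    using weighted_comparison.nagata_dim_le_transfer[OF weighted_comparison_dinv]
      weighted_comparison.nagata_dim_le_transfer[OF weighted_comparison_d] by blast
  then show ?thesis
    by (simp add: nagata_dim_eq_Inf)
qed

end
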